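(* Let $(X,\langle\cdot,\cdot\rangle,\|\cdot\|)$ be a separable Hilbert space, $A:D(A)\subset X\to X$ a densely defined self-adjoint linear operator with $\langle Ax,x\rangle\ge0$ for all $x\in D(A)$ and with $(\lambda I+A)^{-1}$ compact for some $\lambda>0$; let $0\le\lambda_1\le\lambda_2\le\dots$ be its eigenvalues with associated orthonormal eigenbasis $\{\varphi_k\}_{k\ge1}$. Let $B:D(B)\subset X\to X$ be linear with $D(A^{1/2})\subset D(B)$ and $\|B\varphi\|\le C_B\|\varphi\|_{1/2}$ for all $\varphi\in D(A^{1/2})$, for some constant $C_B>0$. Let $T>0$, let $N(T)>0$ be a constant, let $v_0\in D(A^{1/2})$ satisfy $N(T)\|v_0\|_{1/2}\le1$, and let $p\in L^2(0,T)$ satisfy $\|p\|_{L^2(0,T)}\le N(T)\|v_0\|$. Let $v$ be the solution of $$v'(t)+Av(t)+p(t)Bv(t)+p(t)B\varphi_1=0,\ t\in[0,T],\qquad v(0)=v_0,$$ and let $w(\cdot;0,p)$ be the solution of $$w'(t)+Aw(t)+p(t)Bv(t)=0,\ t\in[0,T],\qquad w(0)=0.$$ Then $$\|w(T;0,p)\|_{1/2}\le K(T)\|v_0\|_{1/2}^2,$$ where $K(T)^2:=2e^{C_4(T)}C_B^2N(T)^2C_5(T)$ with $$C_4(T):=C_B\Big(\tfrac52C_B+2\sqrt T\Big)+2T,\qquad C_5(T):=1+\tfrac52C_B^2(1+\lambda_1^{1/2})^2N(T)^2+\tfrac32C_B^2\big(C_B^2(1+\lambda_1^{1/2})^2N(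T)^2+1\big).$$
   Context: For $s\ge0$, $D(A^s)=\{x:\sum_k\lambda_k^{2s}|\langle x,\varphi_k\rangle|^2<\infty\}$, $A^sx=\sum_k\lambda_k^s\langle x,\varphi_k\rangle\varphi_k$, and $\|x\|_{s}:=\|x\|_{D(A^s)}=(\|x\|^2+\|A^sx\|^2)^{1/2}$. Solutions are understood as the unique mild (equivalently strict) solutions, belonging to $C([0,T];D(A^{1/2}))\cap H^1(0,T;X)\cap L^2(0,T;D(A))$. *)

theory Defs
  imports "HOL-Analysis.Analysis"
begin

text \<open>The nonnegative self-adjoint operator A with compact resolvent is represented by its
spectral data: nondecreasing eigenvalues lam k (k = 0,1,2,..., i.e. the paper's lambda_(k+1))
and an orthonormal eigenbasis phi k.\<close>

definition is_onb :: "(nat \<Rightarrow> 'a::real_inner) \<Rightarrow> bool" where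
  "is_onb phi \<longleftrightarrow> (\<forall>i j. inner (phi i) (phi j) = (if i = j then 1 else 0))
                    \<and> closure (span (range phi)) = UNIV"

definition DHalf :: "(nat \<Rightarrow> real) \<Rightarrow> (nat \<Rightarrow> 'a::real_inner) \<Rightarrow> 'a set" where
  "DHalf lam phi = {x. summable (\<lambda>k. lam k * (inner x (phi k))\<^sup>2)}"

definition Ahalf :: "(nat \<Rightarrow> real) \<Rightarrow> (nat \<Rightarrow> 'a::real_inner) \<Rightarrow> 'a \<Rightarrow> 'a" where
  "Ahalf lam phi x = (\<Sum>k. (sqrt (lam k) * inner x (phi k)) *\<^sub>R phi k)"

definition norm_half :: "(nat \<Rightarrow> real) \<Rightarrow> (nat \<Rightarrow> 'a::real_inner) \<Rightarrow> 'a \<Rightarrow> real" where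
  "norm_half lam phi x = sqrt ((norm x)\<^sup>2 + (norm (Ahalf lam phi x))\<^sup>2)"

definition heat_sg :: "(nat \<Rightarrow> real) \<Rightarrow> (nat \<Rightarrow> 'a::real_inner) \<Rightarrow> real \<Rightarrow> 'a \<Rightarrow> 'a" where
  "heat_sg lam phi t x = (\<Sum>k. (exp (- lam k * t) * inner x (phi k)) *\<^sub>R phi k)"

end

theory Submission
  imports Defs
begin

text \<open>Expand in the eigenbasis. The k-th coefficient of a Duhamel integral
  z = int_0^t e^(-(t-s)A) F(s) ds is int_0^t e^(-lam_k (t-s)) F_k(s) ds, and the Cauchy-Schwarz
  inequality against the weight e^(-(1+lam_k)(t-s)) gives
  (1 + lam_k) z_k^2 <= 1/2 int_0^t e^(2(t-s)) F_k(s)^2 ds; summing over k,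
  ||z||_(1/2)^2 <= 1/2 int_0^t e^(2(t-s)) ||F(s)||^2 ds.
  For v the forcing is bounded by |p| C_B (||v||_(1/2) + (1 + lam_1)^(1/2)), so
  e^(-2t) ||v(t)||_(1/2)^2 satisfies an integral inequality with the integrable weight
  3/2 C_B^2 p^2, and a Gronwall argument bounds it by a multiple of ||v_0||_(1/2)^2, because
  ||p||_(L^2)^2 <= N^2 ||v_0||_(1/2)^2 <= 1. For w(T) the forcing is p B v, and the same estimate gives
  ||w(T)||_(1/2)^2 <= 1/2 e^(2T) C_B^2 ||p||_(L^2)^2 sup_t e^(-2t) ||v(t)||_(1/2)^2,
  which is of order N^2 ||v_0||_(1/2)^4.\<close>

definition orthonormal_seq :: "(nat \<Rightarrow> 'a::real_inner) \<Rightarrow> bool" where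
  "orthonormal_seq phi \<longleftrightarrow> (\<forall>i j. inner (phi i) (phi j) = (if i = j then 1 else 0))"

lemma is_onb_imp_orthonormal_seq: "is_onb phi \<Longrightarrow> orthonormal_seq phi"
  unfolding is_onb_def orthonormal_seq_def by blast

lemma norm_sum_orthonormal_sq:
  assumes "orthonormal_seq phi" "finite F"
  shows "(norm (\<Sum>k\<in>F. a k *\<^sub>R phi k))\<^sup>2 = (\<Sum>k\<in>F. (a k)\<^sup>2)"
proof -
  have "(norm (\<Sum>k\<in>F. a k *\<^sub>R phi k))\<^sup>2 = (\<Sum>i\<in>F. \<Sum>j\<in>F. a i * a j * inner (phi i) (phi j))"
    by (simp add: power2_norm_eq_inner inner_sum_left inner_sum_right sum_distrib_left mult_ac inner_commute)
  also have "\<dots> = (\<Sum>i\<in>F. \<Sum>j\<in>F. if i = j then a i * a j else 0)"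
    using assms(1) unfolding orthonormal_seq_def by (intro sum.cong refl) auto
  also have "\<dots> = (\<Sum>k\<in>F. (a k)\<^sup>2)"
    using assms(2) by (simp add: power2_eq_square)
  finally show ?thesis .
qed

lemma summable_orthonormal_series:
  fixes phi :: "nat \<Rightarrow> 'a::{real_inner,banach}"
  assumes "orthonormal_seq phi" "summable (\<lambda>k. (a k)\<^sup>2)"
  shows "summable (\<lambda>k. a k *\<^sub>R phi k)"
  unfolding summable_Cauchy
proof (intro allI impI)
  fix e :: real assume e: "e > 0"
  then obtain M where M: "\<forall>m\<ge>M. \<forall>n. norm (\<Sum>k = m..<n. (a k)\<^sup>2) < e\<^sup>2"
    using assms(2) unfolding summable_Cauchy by (meson zero_less_power)
  show "\<exists>M. \<forall>m\<ge>M. \<forall>n. norm (\<Sum>k = m..<n. a k *\<^sub>R phi k) < e"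
  proof (intro exI allI impI)
    fix m n assume "m \<ge> M"
    then have "(norm (\<Sum>k = m..<n. a k *\<^sub>R phi k))\<^sup>2 < e\<^sup>2"
      using M norm_sum_orthonormal_sq[OF assms(1), of "{m..<n}" a]
      by (metis abs_less_iff finite_atLeastLessThan real_norm_def)
    then show "norm (\<Sum>k = m..<n. a k *\<^sub>R phi k) < e"
      using e by (simp add: power_less_imp_less_base)
  qed
qed

lemma inner_suminf_orthonormal:
  fixes phi :: "nat \<Rightarrow> 'a::{real_inner,banach}"
  assumes "orthonormal_seq phi" "summable (\<lambda>k. (a k)\<^sup>2)"
  shows "inner (\<Sum>k. a k *\<^sub>R phi k) (phi j) = a j"
proof -
  have "inner (\<Sum>k. a k *\<^sub>R phi k) (phi j) = (\<Sum>k. inner (a k *\<^sub>R phi k) (phi j))"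
    using bounded_linear.suminf[OF bounded_linear_inner_left summable_orthonormal_series[OF assms]]
    by simp
  also have "\<dots> = (\<Sum>k. if k = j then a j else 0)"
    using assms(1) unfolding orthonormal_seq_def by (intro suminf_cong) auto
  also have "\<dots> = a j"
    by (rule sums_unique[symmetric]) (rule sums_single)
  finally show ?thesis .
qed

lemma norm_suminf_orthonormal_sq:
  fixes phi :: "nat \<Rightarrow> 'a::{real_inner,banach}"
  assumes "orthonormal_seq phi" "summable (\<lambda>k. (a k)\<^sup>2)"
  shows "(norm (\<Sum>k. a k *\<^sub>R phi k))\<^sup>2 = (\<Sum>k. (a k)\<^sup>2)"
proof -
  have "(\<lambda>n. (norm (\<Sum>k<n. a k *\<^sub>R phi k))\<^sup>2) \<longlonglongrightarrow> (norm (\<Sum>k. a k *\<^sub>R phi k))\<^sup>2"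
    by (intro tendsto_intros summable_LIMSEQ summable_orthonormal_series[OF assms])
  then have "(\<lambda>n. \<Sum>k<n. (a k)\<^sup>2) \<longlonglongrightarrow> (norm (\<Sum>k. a k *\<^sub>R phi k))\<^sup>2"
    by (simp add: norm_sum_orthonormal_sq[OF assms(1)])
  with summable_LIMSEQ[OF assms(2)] show ?thesis
    using LIMSEQ_unique by blast
qed

lemma Bessel_inequality:
  assumes "orthonormal_seq phi"
  shows "(\<Sum>k<n. (inner x (phi k))\<^sup>2) \<le> (norm x)\<^sup>2"
proof -
  define y where "y = (\<Sum>k<n. inner x (phi k) *\<^sub>R phi k)"
  have xy: "inner x y = (\<Sum>k<n. (inner x (phi k))\<^sup>2)"
    by (simp add: y_def inner_sum_right power2_eq_square)
  have yy: "(norm y)\<^sup>2 = (\<Sum>k<n. (inner x (phi k))\<^sup>2)"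
    unfolding y_def by (rule norm_sum_orthonormal_sq[OF assms]) simp
  have "0 \<le> (norm (x - y))\<^sup>2" by simp
  also have "\<dots> = (norm x)\<^sup>2 - 2 * inner x y + (norm y)\<^sup>2"
    by (simp add: power2_norm_eq_inner inner_diff_left inner_diff_right inner_commute)
  finally show ?thesis using xy yy by simp
qed

lemma summable_Fourier_coeff_sq:
  "orthonormal_seq phi \<Longrightarrow> summable (\<lambda>k. (inner x (phi k))\<^sup>2)"
  using Bessel_inequality by (intro summableI_nonneg_bounded) auto

lemma onb_expansion:
  fixes phi :: "nat \<Rightarrow> 'a::{real_inner,banach}"
  assumes "is_onb phi"
  shows "x = (\<Sum>k. inner x (phi k) *\<^sub>R phi k)"
proof -
  have orth: "orthonormal_seq phi" using assms by (rule is_onb_imp_orthonormal_seq)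
  define z where "z = x - (\<Sum>k. inner x (phi k) *\<^sub>R phi k)"
  have "inner z (phi k) = 0" for k
    unfolding z_def using inner_suminf_orthonormal[OF orth summable_Fourier_coeff_sq[OF orth]]
    by (simp add: inner_diff_left)
  then have "span (range phi) \<subseteq> {y. inner z y = 0}"
    by (intro span_minimal) (auto simp: subspace_def inner_add_right inner_commute)
  then have "closure (span (range phi)) \<subseteq> {y. inner z y = 0}"
    by (rule closure_minimal) (intro closed_Collect_eq continuous_intros)
  then have "inner z z = 0" using assms unfolding is_onb_def by blast
  then have "z = 0" by simp
  then show ?thesis unfolding z_def by simp
qed

lemma Parseval_identity:
  fixes phi :: "nat \<Rightarrow> 'a::{real_inner,banach}"
  assumes "is_onb phi"
  shows "(norm x)\<^sup>2 = (\<Sum>k. (inner x (phi k))\<^sup>2)"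
proof -
  have orth: "orthonormal_seq phi" using assms by (rule is_onb_imp_orthonormal_seq)
  have "(norm x)\<^sup>2 = (norm (\<Sum>k. inner x (phi k) *\<^sub>R phi k))\<^sup>2"
    using onb_expansion[OF assms] by metis
  also have "\<dots> = (\<Sum>k. (inner x (phi k))\<^sup>2)"
    by (rule norm_suminf_orthonormal_sq[OF orth summable_Fourier_coeff_sq[OF orth]])
  finally show ?thesis .
qed

lemma abs_inner_orthonormal_le:
  assumes "orthonormal_seq phi"
  shows "\<bar>inner x (phi k)\<bar> \<le> norm x"
proof -
  have "norm (phi k) = 1" using assms unfolding orthonormal_seq_def by (simp add: norm_eq_sqrt_inner)
  then show ?thesis using Cauchy_Schwarz_ineq2[of x "phi k"] by simp
qed

lemma set_integral_nonneg:
  fixes f :: "'b \<Rightarrow> real"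
  assumes "\<And>x. x \<in> A \<Longrightarrow> 0 \<le> f x"
  shows "0 \<le> (LINT x:A|M. f x)"
  unfolding set_lebesgue_integral_def
  by (rule integral_nonneg_AE) (auto simp: indicator_def assms)

lemma set_integral_sum:
  fixes f :: "'i \<Rightarrow> 'b \<Rightarrow> real"
  assumes "\<And>i. i \<in> I \<Longrightarrow> set_integrable M A (f i)"
  shows "set_integrable M A (\<lambda>x. \<Sum>i\<in>I. f i x)"
    and "(LINT x:A|M. (\<Sum>i\<in>I. f i x)) = (\<Sum>i\<in>I. LINT x:A|M. f i x)"
  using assms
  by (simp_all add: set_integrable_def set_lebesgue_integral_def sum_distrib_left integral_sum)

lemma set_borel_measurable_mult:
  fixes f g :: "'b \<Rightarrow> real"
  assumes "set_borel_measurable M A f" "set_borel_measurable M A g"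
  shows "set_borel_measurable M A (\<lambda>x. f x * g x)"
proof -
  have "(\<lambda>x. indicator A x *\<^sub>R (f x * g x)) = (\<lambda>x. (indicator A x *\<^sub>R f x) * (indicator A x *\<^sub>R g x))"
    by (auto simp: indicator_def)
  then show ?thesis using assms unfolding set_borel_measurable_def by simp
qed

lemma set_integrable_imp_set_borel_measurable:
  fixes f :: "'b \<Rightarrow> real"
  shows "set_integrable M A f \<Longrightarrow> set_borel_measurable M A f"
  unfolding set_integrable_def set_borel_measurable_def by simp

lemma set_borel_measurable_continuous_on_interval:
  fixes f :: "real \<Rightarrow> real"
  shows "continuous_on {a..b} f \<Longrightarrow> set_borel_measurable lborel {a..b} f"
  using set_measurable_continuous_on[of "{a..b}" f] unfolding set_borel_measurable_def by simp

lemma set_integrable_dominated: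
  fixes f g :: "'b \<Rightarrow> real"
  assumes "set_integrable M A f" "set_borel_measurable M A g" "\<And>x. x \<in> A \<Longrightarrow> \<bar>g x\<bar> \<le> f x"
  shows "set_integrable M A g"
  by (rule set_integrable_bound[OF assms(1,2)]) (auto intro!: AE_I2 dest: assms(3) intro: order_trans)

lemma set_integrable_continuous_mult:
  fixes f g :: "real \<Rightarrow> real"
  assumes f: "set_integrable lborel {a..b} f" and g: "continuous_on {a..b} g"
  shows "set_integrable lborel {a..b} (\<lambda>s. g s * f s)"
proof -
  obtain M where M: "\<And>s. s \<in> {a..b} \<Longrightarrow> \<bar>g s\<bar> \<le> M"
    using compact_imp_bounded[OF compact_continuous_image[OF g compact_Icc]]
    unfolding bounded_iff by (metis image_eqI real_norm_def)
  show ?thesis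
  proof (rule set_integrable_dominated)
    show "set_integrable lborel {a..b} (\<lambda>s. M * \<bar>f s\<bar>)"
      using set_integrable_abs[OF f] by simp
    show "set_borel_measurable lborel {a..b} (\<lambda>s. g s * f s)"
      by (intro set_borel_measurable_mult set_borel_measurable_continuous_on_interval g
          set_integrable_imp_set_borel_measurable f)
  qed (use M in \<open>auto simp: abs_mult intro: mult_right_mono\<close>)
qed

lemma inner_set_integral:
  fixes f :: "'b \<Rightarrow> 'a::{real_inner,banach,second_countable_topology}"
  assumes "set_integrable M A f"
  shows "set_integrable M A (\<lambda>x. inner (f x) y)"
    and "inner (LINT x:A|M. f x) y = (LINT x:A|M. inner (f x) y)"
proof -
  have int: "integrable M (\<lambda>x. indicator A x *\<^sub>R f x)"
    using assms unfolding set_integrable_def .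
  have eq: "(\<lambda>x. indicator A x *\<^sub>R inner (f x) y) = (\<lambda>x. inner (indicator A x *\<^sub>R f x) y)"
    by simp
  show "set_integrable M A (\<lambda>x. inner (f x) y)"
    unfolding set_integrable_def eq by (rule integrable_inner_left[OF int])
  show "inner (LINT x:A|M. f x) y = (LINT x:A|M. inner (f x) y)"
    unfolding set_lebesgue_integral_def eq by (rule integral_inner_left[OF int, symmetric])
qed

lemma set_integral_Cauchy_Schwarz:
  fixes f g :: "'b \<Rightarrow> real"
  assumes f2: "set_integrable M A (\<lambda>x. (f x)\<^sup>2)" and g2: "set_integrable M A (\<lambda>x. (g x)\<^sup>2)"
    and fg: "set_integrable M A (\<lambda>x. f x * g x)"
  shows "(LINT x:A|M. f x * g x)\<^sup>2 \<le> (LINT x:A|M. (f x)\<^sup>2) * (LINT x:A|M. (g x)\<^sup>2)"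
proof -
  define F G H where "F = (LINT x:A|M. (f x)\<^sup>2)" and "G = (LINT x:A|M. (g x)\<^sup>2)"
    and "H = (LINT x:A|M. f x * g x)"
  have quadratic_nonneg: "0 \<le> r\<^sup>2 * F - 2 * r * H + G" for r
  proof -
    have "(\<lambda>x. (r * f x - g x)\<^sup>2) = (\<lambda>x. r\<^sup>2 * (f x)\<^sup>2 - 2 * r * (f x * g x) + (g x)\<^sup>2)"
      by (auto simp: power2_eq_square algebra_simps)
    then have "(LINT x:A|M. (r * f x - g x)\<^sup>2) = r\<^sup>2 * F - 2 * r * H + G"
      using f2 g2 fg unfolding F_def G_def H_def by simp
    moreover have "0 \<le> (LINT x:A|M. (r * f x - g x)\<^sup>2)" by (rule set_integral_nonneg) simp
    ultimately show ?thesis by simp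
  qed
  have "0 \<le> F" unfolding F_def by (rule set_integral_nonneg) simp
  show ?thesis
  proof (cases "F = 0")
    case True
    have "H = 0"
    proof (rule ccontr)
      assume "H \<noteq> 0"
      then show False using quadratic_nonneg[of "(G + 1) / (2 * H)"] True by (simp add: field_simps)
    qed
    with True show ?thesis unfolding F_def H_def by simp
  next
    case False
    with \<open>0 \<le> F\<close> have "0 < F" by simp
    with quadratic_nonneg[of "H / F"] have "H\<^sup>2 \<le> F * G"
      by (simp add: field_simps power2_eq_square)
    then show ?thesis unfolding F_def G_def H_def .
  qed
qed

lemma set_integral_exp_decay:
  fixes c t :: real
  assumes c: "c > 0" and t: "0 \<le> t"
  shows "set_integrable lborel {0..t} (\<lambda>s. exp (- c * (t - s)))"
    and "(LINT s:{0..t}|lborel. exp (- c * (t - s))) \<le> 1 / c"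
proof -
  show int: "set_integrable lborel {0..t} (\<lambda>s. exp (- c * (t - s)))"
    by (intro borel_integrable_atLeastAtMost' continuous_intros)
  define E where "E s = exp (- c * (t - s)) / c" for s
  have "(E has_real_derivative exp (- c * (t - s))) (at s within {0..t})" for s
    unfolding E_def using c by (auto intro!: derivative_eq_intros simp: field_simps)
  then have "((\<lambda>s. exp (- c * (t - s))) has_integral (E t - E 0)) {0..t}"
    using t by (intro fundamental_theorem_of_calculus) (auto simp: has_real_derivative_iff_has_vector_derivative)
  then have "(LINT s:{0..t}|lborel. exp (- c * (t - s))) = E t - E 0"
    using set_borel_integral_eq_integral(2)[OF int] by (simp add: integral_unique)
  also have "\<dots> \<le> 1 / c" unfolding E_def using c by (simp add: divide_simps)
  finally show "(LINT s:{0..t}|lborel. exp (- c * (t - s))) \<le> 1 / c" .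
qed

text \<open>Cauchy-Schwarz for the splitting \<open>exp (- l * (t - s)) * h s = exp (- (1 + l) * (t - s)) * (exp (t - s) * h s)\<close>:
  the first factor has squared \<open>L\<^sup>2\<close> norm at most \<open>1 / (2 * (1 + l))\<close>, which pays for the weight
  \<open>1 + l\<close> of the half norm.\<close>

lemma Duhamel_mode_sq_le:
  fixes h :: "real \<Rightarrow> real" and t l :: real
  assumes t: "0 \<le> t" and l: "0 \<le> l"
    and int1: "set_integrable lborel {0..t} (\<lambda>s. exp (- l * (t - s)) * h s)"
    and int2: "set_integrable lborel {0..t} (\<lambda>s. exp (2 * (t - s)) * (h s)\<^sup>2)"
  shows "(1 + l) * (LINT s:{0..t}|lborel. exp (- l * (t - s)) * h s)\<^sup>2
           \<le> 1 / 2 * (LINT s:{0..t}|lborel. exp (2 * (t - s)) * (h s)\<^sup>2)"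
proof -
  define f g where "f s = exp (- (1 + l) * (t - s))" and "g s = exp (t - s) * h s" for s
  have fg: "f s * g s = exp (- l * (t - s)) * h s" for s
    unfolding f_def g_def by (simp add: mult.assoc[symmetric] exp_add[symmetric] algebra_simps)
  have f2: "(f s)\<^sup>2 = exp (- (2 * (1 + l)) * (t - s))" for s
    unfolding f_def by (simp add: power2_eq_square exp_add[symmetric] algebra_simps)
  have g2: "(g s)\<^sup>2 = exp (2 * (t - s)) * (h s)\<^sup>2" for s
    unfolding g_def by (simp add: power2_eq_square exp_add[symmetric] algebra_simps)
  define G where "G = (LINT s:{0..t}|lborel. exp (2 * (t - s)) * (h s)\<^sup>2)"
  have "0 \<le> G" unfolding G_def by (rule set_integral_nonneg) simp
  have decay: "(LINT s:{0..t}|lborel. exp (- (2 * (1 + l)) * (t - s))) \<le> 1 / (2 * (1 + l))"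
    using set_integral_exp_decay(2)[of "2 * (1 + l)" t] l t by simp
  have "(LINT s:{0..t}|lborel. exp (- l * (t - s)) * h s)\<^sup>2
      \<le> (LINT s:{0..t}|lborel. exp (- (2 * (1 + l)) * (t - s))) * G"
    using set_integral_Cauchy_Schwarz[of lborel "{0..t}" f g] set_integral_exp_decay(1)[of "2 * (1 + l)" t]
      int1 int2 l t unfolding fg f2 g2 G_def by simp
  also have "\<dots> \<le> 1 / (2 * (1 + l)) * G"
    by (rule mult_right_mono[OF decay \<open>0 \<le> G\<close>])
  finally show ?thesis using l unfolding G_def by (simp add: field_simps)
qed

lemma set_integral_split_at:
  fixes f :: "real \<Rightarrow> real"
  assumes f: "set_integrable lborel {0..T} f" and "0 \<le> t0" "t0 \<le> t" "t \<le> T"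
  shows "(LINT s:{0..t}|lborel. f s) = (LINT s:{0..t0}|lborel. f s) + (LINT s:{t0<..t}|lborel. f s)"
proof -
  have split: "{0..t} = {0..t0} \<union> {t0<..t}" using assms by auto
  have "set_integrable lborel {0..t0} f" "set_integrable lborel {t0<..t} f"
    using assms by (auto intro: set_integrable_subset[OF f])
  then show ?thesis unfolding split by (rule set_integral_Un[rotated]) auto
qed

lemma set_integral_nonneg_mono_interval:
  fixes f :: "real \<Rightarrow> real"
  assumes f: "set_integrable lborel {0..T} f" and f_nonneg: "\<And>s. 0 \<le> f s" and t: "0 \<le> t" "t \<le> T"
  shows "(LINT s:{0..t}|lborel. f s) \<le> (LINT s:{0..T}|lborel. f s)"
  using set_integral_split_at[OF f t order.refl] set_integral_nonneg[of "{t<..T}" f lborel] f_nonneg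
  by simp

lemma set_integral_increment_le:
  fixes q U :: "real \<Rightarrow> real"
  assumes qU: "set_integrable lborel {0..T} (\<lambda>s. q s * U s)" and q: "set_integrable lborel {0..T} q"
    and q_nonneg: "\<And>s. 0 \<le> q s" and t: "0 \<le> t0" "t0 \<le> t" "t \<le> T"
    and U_le: "\<And>s. s \<in> {t0..t} \<Longrightarrow> U s \<le> M"
  shows "(LINT s:{0..t}|lborel. q s * U s)
           \<le> (LINT s:{0..t0}|lborel. q s * U s)
              + M * ((LINT s:{0..t}|lborel. q s) - (LINT s:{0..t0}|lborel. q s))"
proof -
  have "(LINT s:{t0<..t}|lborel. q s * U s) \<le> (LINT s:{t0<..t}|lborel. M * q s)"
  proof (rule set_integral_mono)
    show "set_integrable lborel {t0<..t} (\<lambda>s. q s * U s)"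
      using t by (intro set_integrable_subset[OF qU]) auto
    show "set_integrable lborel {t0<..t} (\<lambda>s. M * q s)"
      using t by (intro set_integrable_mult_right set_integrable_subset[OF q]) auto
    show "q s * U s \<le> M * q s" if "s \<in> {t0<..t}" for s
      using U_le[of s] q_nonneg[of s] that by (auto simp: mult.commute intro: mult_right_mono)
  qed
  then show ?thesis
    using set_integral_split_at[OF qU t] set_integral_split_at[OF q t] by simp
qed

text \<open>Since \<open>p\<close> is only square integrable, the Gronwall weight need not be continuous and the
  differential proof of Gronwall's lemma is not available. Instead: across every stretch on which
  the integral \<open>Q\<close> of the weight grows by \<open>1 / 2\<close>, the bound \<open>S\<close> at most doubles.\<close>

lemma doubling_bound:
  fixes U S Q :: "real \<Rightarrow> real" and T a :: real and n :: nat
  assumes U_cont: "continuous_on {0..T} U"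
    and U_nonneg: "\<And>t. t \<in> {0..T} \<Longrightarrow> 0 \<le> U t"
    and U_le_S: "\<And>t. t \<in> {0..T} \<Longrightarrow> U t \<le> S t"
    and Q_cont: "continuous_on {0..T} Q" and Q_mono: "mono_on {0..T} Q" and Q0: "Q 0 = 0"
    and S0: "S 0 = a" and a: "0 \<le> a"
    and S_incr: "\<And>t0 t M. 0 \<le> t0 \<Longrightarrow> t0 \<le> t \<Longrightarrow> t \<le> T \<Longrightarrow> (\<And>s. s \<in> {t0..t} \<Longrightarrow> U s \<le> M)
                   \<Longrightarrow> S t \<le> S t0 + M * (Q t - Q t0)"
    and t: "t \<in> {0..T}" and Qt: "Q t \<le> n / 2"
  shows "S t \<le> a * 2 ^ n"
  using t Qt
proof (induction n arbitrary: t)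
  case 0
  have "\<exists>sm\<in>{0..t}. \<forall>s\<in>{0..t}. U s \<le> U sm"
    using 0 by (intro continuous_attains_sup continuous_on_subset[OF U_cont]) auto
  then obtain M where "\<And>s. s \<in> {0..t} \<Longrightarrow> U s \<le> M" by blast
  then have "S t \<le> S 0 + M * (Q t - Q 0)"
    using 0 by (intro S_incr) auto
  moreover have "Q t = 0"
    using 0 Q0 mono_onD[OF Q_mono, of 0 t] by auto
  ultimately show ?case using Q0 S0 by simp
next
  case (Suc n)
  show ?case
  proof (cases "Q t \<le> n / 2")
    case True
    then have "S t \<le> a * 2 ^ n" by (rule Suc.IH[OF Suc.prems(1)])
    also have "\<dots> \<le> a * 2 ^ Suc n" using a by simp
    finally show ?thesis .
  next
    case False
    have "\<exists>t0. 0 \<le> t0 \<and> t0 \<le> t \<and> Q t0 = n / 2"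
      using Suc.prems False Q0 by (intro IVT' continuous_on_subset[OF Q_cont]) auto
    then obtain t0 where t0: "0 \<le> t0" "t0 \<le> t" "Q t0 = n / 2" by blast
    have "\<exists>sm\<in>{t0..t}. \<forall>s\<in>{t0..t}. U s \<le> U sm"
      using t0 Suc.prems by (intro continuous_attains_sup continuous_on_subset[OF U_cont]) auto
    then obtain sm where sm: "sm \<in> {t0..t}" and sm_max: "\<And>s. s \<in> {t0..t} \<Longrightarrow> U s \<le> U sm"
      by blast
    have half: "S s \<le> S t0 + U sm / 2" if "s \<in> {t0..t}" for s
    proof -
      have "S s \<le> S t0 + U sm * (Q s - Q t0)"
        using that t0 Suc.prems by (intro S_incr sm_max) auto
      also have "\<dots> \<le> S t0 + U sm * (1 / 2)"
        using that t0 Suc.prems mono_onD[OF Q_mono, of s t] U_nonneg[of sm] sm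
        by (intro add_left_mono mult_left_mono) auto
      finally show ?thesis by simp
    qed
    have "U sm \<le> S sm" using U_le_S[of sm] sm t0 Suc.prems by auto
    then have "S t \<le> 2 * S t0" using half[OF sm] half[of t] t0 by auto
    also have "S t0 \<le> a * 2 ^ n" using Suc.IH[of t0] t0 Suc.prems by auto
    finally show ?thesis by simp
  qed
qed

lemma Gronwall_dyadic:
  fixes U q :: "real \<Rightarrow> real" and T a :: real and m :: nat
  assumes T: "0 \<le> T" and U_cont: "continuous_on {0..T} U"
    and U_nonneg: "\<And>t. t \<in> {0..T} \<Longrightarrow> 0 \<le> U t"
    and q_nonneg: "\<And>t. 0 \<le> q t" and q_int: "set_integrable lborel {0..T} q" and a: "0 \<le> a"
    and U_le: "\<And>t. t \<in> {0..T} \<Longrightarrow> U t \<le> a + (LINT s:{0..t}|lborel. q s * U s)"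
    and q_total: "(LINT s:{0..T}|lborel. q s) \<le> m / 2"
    and t: "t \<in> {0..T}"
  shows "U t \<le> a * 2 ^ m"
proof -
  define Q where "Q t = (LINT s:{0..t}|lborel. q s)" for t
  define S where "S t = a + (LINT s:{0..t}|lborel. q s * U s)" for t
  have qU_int: "set_integrable lborel {0..T} (\<lambda>s. q s * U s)"
    using set_integrable_continuous_mult[OF q_int U_cont] by (simp add: mult.commute)
  have Q_cont: "continuous_on {0..T} Q"
  proof -
    have "continuous_on {0..T} (\<lambda>t. integral {0..t} q)"
      by (rule indefinite_integral_continuous_1[OF set_borel_integral_eq_integral(1)[OF q_int]])
    moreover have "integral {0..t} q = Q t" if "t \<in> {0..T}" for t
      unfolding Q_def using that
      by (intro set_borel_integral_eq_integral(2)[symmetric] set_integrable_subset[OF q_int]) auto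
    ultimately show ?thesis by (rule continuous_on_eq)
  qed
  have Q_mono: "mono_on {0..T} Q"
  proof (rule mono_onI)
    fix r s assume "r \<in> {0..T}" "s \<in> {0..T}" "r \<le> s"
    then show "Q r \<le> Q s"
      unfolding Q_def
      by (intro set_integral_nonneg_mono_interval set_integrable_subset[OF q_int] q_nonneg) auto
  qed
  have integral_0: "(LINT s:{0..0}|lborel. f s) = 0" if "set_integrable lborel {0..T} f"
    for f :: "real \<Rightarrow> real"
    using set_borel_integral_eq_integral(2)[OF set_integrable_subset[OF that, of "{0..0}"]] T by simp
  have "S t \<le> a * 2 ^ m"
  proof (rule doubling_bound[OF U_cont U_nonneg _ Q_cont Q_mono _ _ a _ t])
    show "U t \<le> S t" if "t \<in> {0..T}" for t
      using U_le[OF that] unfolding S_def .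
    show "Q 0 = 0" "S 0 = a"
      unfolding Q_def S_def using integral_0 q_int qU_int by auto
    show "S t \<le> S t0 + M * (Q t - Q t0)"
      if "0 \<le> t0" "t0 \<le> t" "t \<le> T" "\<And>s. s \<in> {t0..t} \<Longrightarrow> U s \<le> M" for t0 t M
      using set_integral_increment_le[OF qU_int q_int q_nonneg that] unfolding S_def Q_def by simp
    show "Q t \<le> m / 2"
      using t mono_onD[OF Q_mono, of t T] q_total unfolding Q_def by auto
  qed
  then show ?thesis using U_le[OF t] unfolding S_def by simp
qed

locale spectral_basis =
  fixes lam :: "nat \<Rightarrow> real" and phi :: "nat \<Rightarrow> 'a::{real_inner,banach,second_countable_topology}"
  assumes onb: "is_onb phi" and lam_nonneg: "\<And>k. 0 \<le> lam k"
begin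

lemma orthonormal: "orthonormal_seq phi"
  using onb by (rule is_onb_imp_orthonormal_seq)

lemma norm_Ahalf_sq:
  assumes "x \<in> DHalf lam phi"
  shows "(norm (Ahalf lam phi x))\<^sup>2 = (\<Sum>k. lam k * (inner x (phi k))\<^sup>2)"
proof -
  have eq: "(sqrt (lam k) * inner x (phi k))\<^sup>2 = lam k * (inner x (phi k))\<^sup>2" for k
    using lam_nonneg[of k] by (simp add: power_mult_distrib)
  have summable: "summable (\<lambda>k. (sqrt (lam k) * inner x (phi k))\<^sup>2)"
    using assms unfolding DHalf_def eq by simp
  show ?thesis unfolding Ahalf_def norm_suminf_orthonormal_sq[OF orthonormal summable] eq ..
qed

lemma norm_half_sq:
  assumes "x \<in> DHalf lam phi"
  shows "summable (\<lambda>k. (1 + lam k) * (inner x (phi k))\<^sup>2)"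
    and "(norm_half lam phi x)\<^sup>2 = (\<Sum>k. (1 + lam k) * (inner x (phi k))\<^sup>2)"
proof -
  have s1: "summable (\<lambda>k. (inner x (phi k))\<^sup>2)"
    by (rule summable_Fourier_coeff_sq[OF orthonormal])
  have s2: "summable (\<lambda>k. lam k * (inner x (phi k))\<^sup>2)"
    using assms unfolding DHalf_def by simp
  have split: "(\<lambda>k. (1 + lam k) * (inner x (phi k))\<^sup>2)
      = (\<lambda>k. (inner x (phi k))\<^sup>2 + lam k * (inner x (phi k))\<^sup>2)"
    by (simp add: algebra_simps)
  show "summable (\<lambda>k. (1 + lam k) * (inner x (phi k))\<^sup>2)"
    unfolding split by (intro summable_add s1 s2)
  have "(norm_half lam phi x)\<^sup>2 = (norm x)\<^sup>2 + (norm (Ahalf lam phi x))\<^sup>2"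
    unfolding norm_half_def by simp
  also have "\<dots> = (\<Sum>k. (inner x (phi k))\<^sup>2) + (\<Sum>k. lam k * (inner x (phi k))\<^sup>2)"
    using Parseval_identity[OF onb, of x] norm_Ahalf_sq[OF assms] by simp
  also have "\<dots> = (\<Sum>k. (1 + lam k) * (inner x (phi k))\<^sup>2)"
    unfolding split by (rule suminf_add[OF s1 s2])
  finally show "(norm_half lam phi x)\<^sup>2 = (\<Sum>k. (1 + lam k) * (inner x (phi k))\<^sup>2)" .
qed

lemma norm_half_sq_le:
  assumes partial: "\<And>n. (\<Sum>k<n. (1 + lam k) * (inner x (phi k))\<^sup>2) \<le> M"
  shows "x \<in> DHalf lam phi" and "(norm_half lam phi x)\<^sup>2 \<le> M"
proof -
  have nonneg: "0 \<le> (1 + lam k) * (inner x (phi k))\<^sup>2" for k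
    using lam_nonneg[of k] by simp
  have summable: "summable (\<lambda>k. (1 + lam k) * (inner x (phi k))\<^sup>2)"
    using nonneg partial by (rule summableI_nonneg_bounded)
  have "summable (\<lambda>k. (1 + lam k) * (inner x (phi k))\<^sup>2 - (inner x (phi k))\<^sup>2)"
    by (intro summable_diff summable summable_Fourier_coeff_sq[OF orthonormal])
  then show x: "x \<in> DHalf lam phi" unfolding DHalf_def by (simp add: algebra_simps)
  show "(norm_half lam phi x)\<^sup>2 \<le> M"
    unfolding norm_half_sq(2)[OF x] using summable partial by (rule suminf_le_const)
qed

lemma Ahalf_diff:
  assumes x: "x \<in> DHalf lam phi" and y: "y \<in> DHalf lam phi"
  shows "Ahalf lam phi (x - y) = Ahalf lam phi x - Ahalf lam phi y"
proof -
  have summable: "summable (\<lambda>k. (sqrt (lam k) * inner z (phi k)) *\<^sub>R phi k)"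
    if "z \<in> DHalf lam phi" for z
    using that lam_nonneg unfolding DHalf_def
    by (intro summable_orthonormal_series[OF orthonormal]) (simp add: power_mult_distrib)
  show ?thesis
    unfolding Ahalf_def inner_diff_left right_diff_distrib scaleR_diff_left
    by (rule suminf_diff[OF summable[OF x] summable[OF y], symmetric])
qed

lemma norm_half_eq_norm_Pair: "norm_half lam phi x = norm (x, Ahalf lam phi x)"
  unfolding norm_half_def norm_Pair ..

lemma norm_half_diff_le:
  assumes "x \<in> DHalf lam phi" "y \<in> DHalf lam phi"
  shows "norm_half lam phi (x - y) \<le> norm_half lam phi x + norm_half lam phi y"
  using norm_triangle_ineq4[of "(x, Ahalf lam phi x)" "(y, Ahalf lam phi y)"]
  by (simp add: norm_half_eq_norm_Pair Ahalf_diff[OF assms])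

lemma norm_half_Lipschitz:
  assumes "x \<in> DHalf lam phi" "y \<in> DHalf lam phi"
  shows "\<bar>norm_half lam phi x - norm_half lam phi y\<bar> \<le> norm_half lam phi (x - y)"
  using norm_triangle_ineq3[of "(x, Ahalf lam phi x)" "(y, Ahalf lam phi y)"]
  by (simp add: norm_half_eq_norm_Pair Ahalf_diff[OF assms])

lemma inner_heat_sg:
  assumes "0 \<le> t"
  shows "inner (heat_sg lam phi t x) (phi k) = exp (- lam k * t) * inner x (phi k)"
proof -
  have "exp (- lam k * t) \<le> 1" for k
    using lam_nonneg[of k] assms by simp
  then have "norm ((exp (- lam k * t) * inner x (phi k))\<^sup>2) \<le> (inner x (phi k))\<^sup>2" for k
    by (simp add: power_mult_distrib mult_left_le_one_le power_le_one)
  then have "summable (\<lambda>k. (exp (- lam k * t) * inner x (phi k))\<^sup>2)"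
    by (rule summable_comparison_test'[OF summable_Fourier_coeff_sq[OF orthonormal]])
  then show ?thesis unfolding heat_sg_def by (rule inner_suminf_orthonormal[OF orthonormal])
qed

lemma heat_sg_norm_half_le:
  assumes x: "x \<in> DHalf lam phi" and t: "0 \<le> t"
  shows "heat_sg lam phi t x \<in> DHalf lam phi"
    and "norm_half lam phi (heat_sg lam phi t x) \<le> norm_half lam phi x"
proof -
  have "(\<Sum>k<n. (1 + lam k) * (inner (heat_sg lam phi t x) (phi k))\<^sup>2)
      \<le> (norm_half lam phi x)\<^sup>2" for n
  proof -
    have "(\<Sum>k<n. (1 + lam k) * (inner (heat_sg lam phi t x) (phi k))\<^sup>2)
        \<le> (\<Sum>k<n. (1 + lam k) * (inner x (phi k))\<^sup>2)"
    proof (rule sum_mono)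
      fix k
      have "(exp (- lam k * t))\<^sup>2 \<le> 1"
        using lam_nonneg[of k] t by (simp add: power_le_one)
      then show "(1 + lam k) * (inner (heat_sg lam phi t x) (phi k))\<^sup>2 \<le> (1 + lam k) * (inner x (phi k))\<^sup>2"
        using lam_nonneg[of k] unfolding inner_heat_sg[OF t]
        by (intro mult_left_mono) (auto simp: power_mult_distrib mult_left_le_one_le)
    qed
    also have "\<dots> \<le> (norm_half lam phi x)\<^sup>2"
      unfolding norm_half_sq(2)[OF x] using lam_nonneg
      by (intro sum_le_suminf norm_half_sq(1)[OF x]) auto
    finally show ?thesis .
  qed
  from norm_half_sq_le[OF this] show "heat_sg lam phi t x \<in> DHalf lam phi"
    and "norm_half lam phi (heat_sg lam phi t x) \<le> norm_half lam phi x"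
    by (auto simp: norm_half_def intro: power2_le_imp_le)
qed

lemma basis_norm_half:
  shows "phi j \<in> DHalf lam phi" and "norm_half lam phi (phi j) = sqrt (1 + lam j)"
proof -
  have "(\<lambda>k. (1 + lam k) * (inner (phi j) (phi k))\<^sup>2) = (\<lambda>k. if k = j then 1 + lam j else 0)"
    using orthonormal unfolding orthonormal_seq_def by auto
  then have sums: "(\<lambda>k. (1 + lam k) * (inner (phi j) (phi k))\<^sup>2) sums (1 + lam j)"
    using sums_single[of j "\<lambda>_. 1 + lam j"] by simp
  have "(\<Sum>k<n. (1 + lam k) * (inner (phi j) (phi k))\<^sup>2) \<le> 1 + lam j" for n
    using lam_nonneg by (intro sum_le_suminf[OF sums_summable[OF sums], unfolded sums_unique[OF sums, symmetric]]) auto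
  then show phi_j: "phi j \<in> DHalf lam phi" by (rule norm_half_sq_le(1))
  have "(norm_half lam phi (phi j))\<^sup>2 = 1 + lam j"
    using norm_half_sq(2)[OF phi_j] sums_unique[OF sums] by simp
  then show "norm_half lam phi (phi j) = sqrt (1 + lam j)"
    unfolding norm_half_def by simp
qed

lemma norm_half_uminus:
  assumes "x \<in> DHalf lam phi"
  shows "norm_half lam phi (- x) = norm_half lam phi x"
proof -
  have zero: "0 \<in> DHalf lam phi" unfolding DHalf_def by simp
  have "Ahalf lam phi 0 = 0" unfolding Ahalf_def by simp
  then show ?thesis using Ahalf_diff[OF zero assms] by (simp add: norm_half_def)
qed

lemma Duhamel_coeff:
  fixes F :: "real \<Rightarrow> 'a"
  assumes t: "0 \<le> t" and F_int: "set_integrable lborel {0..t} (\<lambda>s. heat_sg lam phi (t - s) (F s))"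
  shows "set_integrable lborel {0..t} (\<lambda>s. exp (- lam k * (t - s)) * inner (F s) (phi k))"
    and "inner (LINT s:{0..t}|lborel. heat_sg lam phi (t - s) (F s)) (phi k)
           = (LINT s:{0..t}|lborel. exp (- lam k * (t - s)) * inner (F s) (phi k))"
proof -
  have eq: "inner (heat_sg lam phi (t - s) (F s)) (phi k) = exp (- lam k * (t - s)) * inner (F s) (phi k)"
    if "s \<in> {0..t}" for s
    using that by (intro inner_heat_sg) auto
  have "set_integrable lborel {0..t} (\<lambda>s. inner (heat_sg lam phi (t - s) (F s)) (phi k))
      = set_integrable lborel {0..t} (\<lambda>s. exp (- lam k * (t - s)) * inner (F s) (phi k))"
    by (rule set_integrable_cong) (auto simp: eq)
  then show "set_integrable lborel {0..t} (\<lambda>s. exp (- lam k * (t - s)) * inner (F s) (phi k))"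
    using inner_set_integral(1)[OF F_int] by simp
  show "inner (LINT s:{0..t}|lborel. heat_sg lam phi (t - s) (F s)) (phi k)
      = (LINT s:{0..t}|lborel. exp (- lam k * (t - s)) * inner (F s) (phi k))"
    unfolding inner_set_integral(2)[OF F_int] by (rule set_lebesgue_integral_cong) (auto simp: eq)
qed

lemma Duhamel_norm_half_sq_le:
  fixes F :: "real \<Rightarrow> 'a" and X :: "real \<Rightarrow> real"
  assumes t: "0 \<le> t"
    and F_int: "set_integrable lborel {0..t} (\<lambda>s. heat_sg lam phi (t - s) (F s))"
    and F_le: "\<And>s. s \<in> {0..t} \<Longrightarrow> (norm (F s))\<^sup>2 \<le> X s"
    and X_int: "set_integrable lborel {0..t} (\<lambda>s. exp (2 * (t - s)) * X s)"
  shows "(LINT s:{0..t}|lborel. heat_sg lam phi (t - s) (F s)) \<in> DHalf lam phi"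
    and "(norm_half lam phi (LINT s:{0..t}|lborel. heat_sg lam phi (t - s) (F s)))\<^sup>2
           \<le> 1 / 2 * (LINT s:{0..t}|lborel. exp (2 * (t - s)) * X s)"
proof -
  define z where "z = (LINT s:{0..t}|lborel. heat_sg lam phi (t - s) (F s))"
  define g where "g k s = inner (F s) (phi k)" for k s
  note int1 = Duhamel_coeff(1)[OF t F_int, folded g_def]
  have exp_meas: "set_borel_measurable lborel {0..t} (\<lambda>s. exp (c * (t - s)))" for c
    by (intro set_borel_measurable_continuous_on_interval continuous_intros)
  have g_meas: "set_borel_measurable lborel {0..t} (g k)" for k
    using set_borel_measurable_mult[OF exp_meas[of "lam k"] set_integrable_imp_set_borel_measurable[OF int1[of k]]]
    by (simp add: mult.assoc[symmetric] exp_add[symmetric])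
  have int2: "set_integrable lborel {0..t} (\<lambda>s. exp (2 * (t - s)) * (g k s)\<^sup>2)" for k
  proof (rule set_integrable_dominated[OF X_int])
    show "set_borel_measurable lborel {0..t} (\<lambda>s. exp (2 * (t - s)) * (g k s)\<^sup>2)"
      unfolding power2_eq_square
      by (intro set_borel_measurable_mult exp_meas g_meas)
    show "\<bar>exp (2 * (t - s)) * (g k s)\<^sup>2\<bar> \<le> exp (2 * (t - s)) * X s" if "s \<in> {0..t}" for s
    proof -
      have "\<bar>g k s\<bar> \<le> \<bar>norm (F s)\<bar>"
        unfolding g_def using abs_inner_orthonormal_le[OF orthonormal] by simp
      then have "(g k s)\<^sup>2 \<le> (norm (F s))\<^sup>2"
        using abs_le_square_iff[of "g k s" "norm (F s)"] by simp
      then show ?thesis using F_le[OF that] by simp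
    qed
  qed
  have mode: "(1 + lam k) * (inner z (phi k))\<^sup>2
      \<le> 1 / 2 * (LINT s:{0..t}|lborel. exp (2 * (t - s)) * (g k s)\<^sup>2)" for k
    unfolding z_def Duhamel_coeff(2)[OF t F_int, folded g_def]
    by (rule Duhamel_mode_sq_le[OF t lam_nonneg int1 int2])
  have "(\<Sum>k<n. (1 + lam k) * (inner z (phi k))\<^sup>2) \<le> 1 / 2 * (LINT s:{0..t}|lborel. exp (2 * (t - s)) * X s)"
    for n
  proof -
    have "(\<Sum>k<n. (1 + lam k) * (inner z (phi k))\<^sup>2)
        \<le> (\<Sum>k<n. 1 / 2 * (LINT s:{0..t}|lborel. exp (2 * (t - s)) * (g k s)\<^sup>2))"
      by (rule sum_mono) (rule mode)
    also have "\<dots> = 1 / 2 * (LINT s:{0..t}|lborel. exp (2 * (t - s)) * (\<Sum>k<n. (g k s)\<^sup>2))"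
      using set_integral_sum(2)[of "{..<n}" lborel "{0..t}" "\<lambda>k s. exp (2 * (t - s)) * (g k s)\<^sup>2"] int2
      by (simp add: sum_distrib_left)
    also have "\<dots> \<le> 1 / 2 * (LINT s:{0..t}|lborel. exp (2 * (t - s)) * X s)"
    proof (rule mult_left_mono[OF set_integral_mono[OF _ X_int]])
      show "set_integrable lborel {0..t} (\<lambda>s. exp (2 * (t - s)) * (\<Sum>k<n. (g k s)\<^sup>2))"
        using set_integral_sum(1)[of "{..<n}" lborel "{0..t}" "\<lambda>k s. exp (2 * (t - s)) * (g k s)\<^sup>2"] int2
        by (simp add: sum_distrib_left)
      show "exp (2 * (t - s)) * (\<Sum>k<n. (g k s)\<^sup>2) \<le> exp (2 * (t - s)) * X s" if "s \<in> {0..t}" for s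
      proof -
        have "(\<Sum>k<n. (g k s)\<^sup>2) \<le> X s"
          unfolding g_def by (rule order_trans[OF Bessel_inequality[OF orthonormal] F_le[OF that]])
        then show ?thesis by simp
      qed
    qed simp
    finally show ?thesis .
  qed
  then show "z \<in> DHalf lam phi"
    and "(norm_half lam phi z)\<^sup>2 \<le> 1 / 2 * (LINT s:{0..t}|lborel. exp (2 * (t - s)) * X s)"
    by (rule norm_half_sq_le)+
qed

end

locale bilinear_mild_solutions = spectral_basis lam phi
  for lam :: "nat \<Rightarrow> real" and phi :: "nat \<Rightarrow> 'a::{real_inner,banach,second_countable_topology}" +
  fixes B :: "'a \<Rightarrow> 'a" and CB T :: real and v0 :: 'a and p :: "real \<Rightarrow> real" and v w :: "real \<Rightarrow> 'a"
  assumes B_bound: "\<forall>x\<in>DHalf lam phi. norm (B x) \<le> CB * norm_half lam phi x"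
    and T_nonneg: "0 \<le> T"
    and v0_dom: "v0 \<in> DHalf lam phi"
    and p_L2: "set_integrable lborel {0..T} (\<lambda>t. (p t)\<^sup>2)"
    and v_dom: "\<forall>t\<in>{0..T}. v t \<in> DHalf lam phi"
    and v_cont: "\<forall>t\<in>{0..T}. ((\<lambda>s. norm_half lam phi (v s - v t)) \<longlongrightarrow> 0) (at t within {0..T})"
    and v_int: "\<forall>t\<in>{0..T}. set_integrable lborel {0..t}
                 (\<lambda>s. heat_sg lam phi (t - s) (p s *\<^sub>R (B (v s) + B (phi 0))))"
    and v_mild: "\<forall>t\<in>{0..T}. v t = heat_sg lam phi t v0
                 - set_lebesgue_integral lborel {0..t}
                     (\<lambda>s. heat_sg lam phi (t - s) (p s *\<^sub>R (B (v s) + B (phi 0))))"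
    and w_int: "\<forall>t\<in>{0..T}. set_integrable lborel {0..t}
                 (\<lambda>s. heat_sg lam phi (t - s) (p s *\<^sub>R B (v s)))"
    and w_mild: "\<forall>t\<in>{0..T}. w t = - set_lebesgue_integral lborel {0..t}
                     (\<lambda>s. heat_sg lam phi (t - s) (p s *\<^sub>R B (v s)))"
begin

definition v_forcing_bound :: "real \<Rightarrow> real" where
  "v_forcing_bound s = (p s)\<^sup>2 * CB\<^sup>2 * (3 / 2 * (norm_half lam phi (v s))\<^sup>2 + 3 * (1 + lam 0))"

lemma norm_half_v_continuous: "continuous_on {0..T} (\<lambda>t. norm_half lam phi (v t))"
  unfolding continuous_on_def
proof
  fix t assume t: "t \<in> {0..T}"
  have "\<forall>\<^sub>F s in at t within {0..T}.
      norm (norm_half lam phi (v s) - norm_half lam phi (v t)) \<le> norm_half lam phi (v s - v t)"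
    using t v_dom norm_half_Lipschitz by (auto simp: eventually_at_filter)
  then have "((\<lambda>s. norm_half lam phi (v s) - norm_half lam phi (v t)) \<longlongrightarrow> 0) (at t within {0..T})"
    by (rule Lim_null_comparison) (use v_cont t in blast)
  then show "((\<lambda>s. norm_half lam phi (v s)) \<longlongrightarrow> norm_half lam phi (v t)) (at t within {0..T})"
    by (simp add: Lim_null[symmetric])
qed

lemma set_integrable_mult_p_sq:
  assumes "t \<le> T" and "continuous_on {0..t} g"
  shows "set_integrable lborel {0..t} (\<lambda>s. g s * (p s)\<^sup>2)"
  using assms by (intro set_integrable_continuous_mult set_integrable_subset[OF p_L2]) auto

lemma forcing_v_sq_le:
  assumes s: "s \<in> {0..T}"
  shows "(norm (p s *\<^sub>R (B (v s) + B (phi 0))))\<^sup>2 \<le> v_forcing_bound s"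
proof -
  define y r where "y = norm_half lam phi (v s)" and "r = sqrt (1 + lam 0)"
  have "norm (B (v s)) \<le> CB * y" "norm (B (phi 0)) \<le> CB * r"
    using B_bound v_dom s basis_norm_half[of 0] unfolding y_def r_def by auto
  then have "norm (B (v s) + B (phi 0)) \<le> CB * (y + r)"
    using norm_triangle_ineq[of "B (v s)" "B (phi 0)"] by (simp add: distrib_left)
  then have "norm (p s *\<^sub>R (B (v s) + B (phi 0))) \<le> \<bar>p s\<bar> * (CB * (y + r))"
    by (simp add: mult_left_mono)
  then have "(norm (p s *\<^sub>R (B (v s) + B (phi 0))))\<^sup>2 \<le> (p s)\<^sup>2 * CB\<^sup>2 * (y + r)\<^sup>2"
    by (metis norm_ge_zero power_mono power_mult_distrib power2_abs mult.assoc)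
  also have "(y + r)\<^sup>2 \<le> 3 / 2 * y\<^sup>2 + 3 * r\<^sup>2"
    using zero_le_power2[of "y - 2 * r"] by (simp add: power2_eq_square algebra_simps)
  then have "(p s)\<^sup>2 * CB\<^sup>2 * (y + r)\<^sup>2 \<le> (p s)\<^sup>2 * CB\<^sup>2 * (3 / 2 * y\<^sup>2 + 3 * r\<^sup>2)"
    by (intro mult_left_mono) auto
  finally show ?thesis
    unfolding v_forcing_bound_def y_def r_def using lam_nonneg[of 0] by simp
qed

lemma forcing_w_sq_le:
  assumes s: "s \<in> {0..T}"
  shows "(norm (p s *\<^sub>R B (v s)))\<^sup>2 \<le> (p s)\<^sup>2 * CB\<^sup>2 * (norm_half lam phi (v s))\<^sup>2"
proof -
  have "norm (p s *\<^sub>R B (v s)) \<le> \<bar>p s\<bar> * (CB * norm_half lam phi (v s))"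
    using B_bound v_dom s by (auto intro!: mult_left_mono)
  then show ?thesis
    by (metis norm_ge_zero power_mono power_mult_distrib power2_abs mult.assoc)
qed

lemma energy_v:
  assumes t: "t \<in> {0..T}"
  shows "(norm_half lam phi (v t))\<^sup>2
           \<le> 2 * (norm_half lam phi v0)\<^sup>2 + (LINT s:{0..t}|lborel. exp (2 * (t - s)) * v_forcing_bound s)"
proof -
  have t0: "0 \<le> t" using t by simp
  define z where "z = (LINT s:{0..t}|lborel. heat_sg lam phi (t - s) (p s *\<^sub>R (B (v s) + B (phi 0))))"
  have "set_integrable lborel {0..t} (\<lambda>s. (exp (2 * (t - s)) * CB\<^sup>2
      * (3 / 2 * (norm_half lam phi (v s))\<^sup>2 + 3 * (1 + lam 0))) * (p s)\<^sup>2)"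
    using t by (intro set_integrable_mult_p_sq continuous_intros
        continuous_on_subset[OF norm_half_v_continuous]) auto
  then have X_int: "set_integrable lborel {0..t} (\<lambda>s. exp (2 * (t - s)) * v_forcing_bound s)"
    unfolding v_forcing_bound_def by (simp add: ac_simps)
  have z: "z \<in> DHalf lam phi"
    "(norm_half lam phi z)\<^sup>2 \<le> 1 / 2 * (LINT s:{0..t}|lborel. exp (2 * (t - s)) * v_forcing_bound s)"
    using Duhamel_norm_half_sq_le[OF t0 _ forcing_v_sq_le X_int] v_int t unfolding z_def by auto
  note heat = heat_sg_norm_half_le[OF v0_dom t0]
  have "norm_half lam phi (v t) \<le> norm_half lam phi v0 + norm_half lam phi z"
    using v_mild t norm_half_diff_le[OF heat(1) z(1)] heat(2) unfolding z_def by auto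
  then have "(norm_half lam phi (v t))\<^sup>2 \<le> (norm_half lam phi v0 + norm_half lam phi z)\<^sup>2"
    by (rule power_mono) (simp add: norm_half_def)
  also have "\<dots> \<le> 2 * (norm_half lam phi v0)\<^sup>2 + 2 * (norm_half lam phi z)\<^sup>2"
    using zero_le_power2[of "norm_half lam phi v0 - norm_half lam phi z"]
    by (simp add: power2_eq_square algebra_simps)
  finally show ?thesis using z(2) by simp
qed

lemma energy_v_weighted:
  assumes t: "t \<in> {0..T}"
  shows "exp (- 2 * t) * (norm_half lam phi (v t))\<^sup>2
           \<le> 2 * (norm_half lam phi v0)\<^sup>2 + (LINT s:{0..t}|lborel. exp (- 2 * s) * v_forcing_bound s)"
proof -
  have "exp (- 2 * t) * (norm_half lam phi (v t))\<^sup>2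
      \<le> exp (- 2 * t) * (2 * (norm_half lam phi v0)\<^sup>2
         + (LINT s:{0..t}|lborel. exp (2 * (t - s)) * v_forcing_bound s))"
    using energy_v[OF t] by (intro mult_left_mono) auto
  also have "\<dots> = exp (- 2 * t) * (2 * (norm_half lam phi v0)\<^sup>2)
      + (LINT s:{0..t}|lborel. exp (- 2 * t) * (exp (2 * (t - s)) * v_forcing_bound s))"
    by (simp add: distrib_left)
  also have "\<dots> = exp (- 2 * t) * (2 * (norm_half lam phi v0)\<^sup>2)
      + (LINT s:{0..t}|lborel. exp (- 2 * s) * v_forcing_bound s)"
    by (simp add: mult.assoc[symmetric] mult_exp_exp)
  also have "\<dots> \<le> 2 * (norm_half lam phi v0)\<^sup>2 + (LINT s:{0..t}|lborel. exp (- 2 * s) * v_forcing_bound s)"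
    using t by (simp add: mult_left_le_one_le)
  finally show ?thesis .
qed

text \<open>The weight \<open>exp (- 2 * t)\<close> cancels the factor \<open>exp (2 * (t - s))\<close> of the mode estimate, which
  turns the energy bound for \<open>v\<close> into a Gronwall inequality with the integrable weight
  \<open>3 / 2 * CB\<^sup>2 * (p s)\<^sup>2\<close>.\<close>

lemma energy_v_integral_inequality:
  assumes t: "t \<in> {0..T}"
  shows "exp (- 2 * t) * (norm_half lam phi (v t))\<^sup>2
    \<le> 2 * (norm_half lam phi v0)\<^sup>2 + 3 * (1 + lam 0) * CB\<^sup>2 * (LINT s:{0..T}|lborel. (p s)\<^sup>2)
       + (LINT s:{0..t}|lborel. 3 / 2 * CB\<^sup>2 * (p s)\<^sup>2 * (exp (- 2 * s) * (norm_half lam phi (v s))\<^sup>2))"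
proof -
  have t0: "0 \<le> t" "t \<le> T" using t by auto
  define L where "L = 1 + lam 0"
  define qU where "qU s = 3 / 2 * CB\<^sup>2 * (p s)\<^sup>2 * (exp (- 2 * s) * (norm_half lam phi (v s))\<^sup>2)" for s
  have cont: "continuous_on {0..t} (\<lambda>s. norm_half lam phi (v s))"
    using t0 by (intro continuous_on_subset[OF norm_half_v_continuous]) auto
  have "set_integrable lborel {0..t} (\<lambda>s. (3 / 2 * CB\<^sup>2 * exp (- 2 * s) * (norm_half lam phi (v s))\<^sup>2) * (p s)\<^sup>2)"
    using t0 cont by (intro set_integrable_mult_p_sq continuous_intros) auto
  then have qU_int: "set_integrable lborel {0..t} qU"
    unfolding qU_def by (simp add: ac_simps)
  have "set_integrable lborel {0..t} (\<lambda>s. (exp (- 2 * s) * CB\<^sup>2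
      * (3 / 2 * (norm_half lam phi (v s))\<^sup>2 + 3 * L)) * (p s)\<^sup>2)"
    using t0 cont by (intro set_integrable_mult_p_sq continuous_intros) auto
  then have X_int: "set_integrable lborel {0..t} (\<lambda>s. exp (- 2 * s) * v_forcing_bound s)"
    unfolding v_forcing_bound_def L_def by (simp add: ac_simps)
  have p_int: "set_integrable lborel {0..t} (\<lambda>s. (p s)\<^sup>2)"
    using t0 by (intro set_integrable_subset[OF p_L2]) auto
  have "(LINT s:{0..t}|lborel. exp (- 2 * s) * v_forcing_bound s)
      \<le> (LINT s:{0..t}|lborel. qU s + 3 * L * CB\<^sup>2 * (p s)\<^sup>2)"
  proof (rule set_integral_mono[OF X_int])
    show "set_integrable lborel {0..t} (\<lambda>s. qU s + 3 * L * CB\<^sup>2 * (p s)\<^sup>2)"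
      using qU_int p_int by simp
    fix s assume "s \<in> {0..t}"
    then have "exp (- 2 * s) * (3 * L * CB\<^sup>2 * (p s)\<^sup>2) \<le> 3 * L * CB\<^sup>2 * (p s)\<^sup>2"
      using lam_nonneg[of 0] unfolding L_def by (intro mult_left_le_one_le) auto
    then show "exp (- 2 * s) * v_forcing_bound s \<le> qU s + 3 * L * CB\<^sup>2 * (p s)\<^sup>2"
      unfolding v_forcing_bound_def qU_def L_def by (simp add: algebra_simps)
  qed
  also have "\<dots> = 3 * L * CB\<^sup>2 * (LINT s:{0..t}|lborel. (p s)\<^sup>2) + (LINT s:{0..t}|lborel. qU s)"
    using qU_int p_int by simp
  also have "\<dots> \<le> 3 * L * CB\<^sup>2 * (LINT s:{0..T}|lborel. (p s)\<^sup>2) + (LINT s:{0..t}|lborel. qU s)"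
    using set_integral_nonneg_mono_interval[OF p_L2 _ t0] lam_nonneg[of 0] unfolding L_def
    by (simp add: mult_left_mono)
  finally show ?thesis
    using energy_v_weighted[OF t] unfolding qU_def L_def by simp
qed

lemma energy_v_Gronwall:
  assumes m: "(LINT s:{0..T}|lborel. 3 / 2 * CB\<^sup>2 * (p s)\<^sup>2) \<le> m / 2" and t: "t \<in> {0..T}"
  shows "exp (- 2 * t) * (norm_half lam phi (v t))\<^sup>2
    \<le> (2 * (norm_half lam phi v0)\<^sup>2 + 3 * (1 + lam 0) * CB\<^sup>2 * (LINT s:{0..T}|lborel. (p s)\<^sup>2)) * 2 ^ m"
proof (rule Gronwall_dyadic[OF T_nonneg _ _ _ _ _ energy_v_integral_inequality m t])
  show "continuous_on {0..T} (\<lambda>t. exp (- 2 * t) * (norm_half lam phi (v t))\<^sup>2)"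
    by (intro continuous_intros norm_half_v_continuous)
  show "set_integrable lborel {0..T} (\<lambda>s. 3 / 2 * CB\<^sup>2 * (p s)\<^sup>2)"
    using p_L2 by simp
  show "0 \<le> 2 * (norm_half lam phi v0)\<^sup>2 + 3 * (1 + lam 0) * CB\<^sup>2 * (LINT s:{0..T}|lborel. (p s)\<^sup>2)"
    using lam_nonneg[of 0] by (intro add_nonneg_nonneg mult_nonneg_nonneg set_integral_nonneg) auto
qed auto

lemma energy_w:
  assumes m: "(LINT s:{0..T}|lborel. 3 / 2 * CB\<^sup>2 * (p s)\<^sup>2) \<le> m / 2"
  defines "a \<equiv> 2 * (norm_half lam phi v0)\<^sup>2 + 3 * (1 + lam 0) * CB\<^sup>2 * (LINT s:{0..T}|lborel. (p s)\<^sup>2)"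
  shows "(norm_half lam phi (w T))\<^sup>2
    \<le> 1 / 2 * exp (2 * T) * CB\<^sup>2 * (a * 2 ^ m) * (LINT s:{0..T}|lborel. (p s)\<^sup>2)"
proof -
  have T: "T \<in> {0..T}" using T_nonneg by simp
  define z where "z = (LINT s:{0..T}|lborel. heat_sg lam phi (T - s) (p s *\<^sub>R B (v s)))"
  define X where "X s = (p s)\<^sup>2 * CB\<^sup>2 * (norm_half lam phi (v s))\<^sup>2" for s
  have "set_integrable lborel {0..T} (\<lambda>s. (exp (2 * (T - s)) * CB\<^sup>2 * (norm_half lam phi (v s))\<^sup>2) * (p s)\<^sup>2)"
    by (intro set_integrable_mult_p_sq continuous_intros norm_half_v_continuous) auto
  then have X_int: "set_integrable lborel {0..T} (\<lambda>s. exp (2 * (T - s)) * X s)"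
    unfolding X_def by (simp add: ac_simps)
  have z: "z \<in> DHalf lam phi"
    "(norm_half lam phi z)\<^sup>2 \<le> 1 / 2 * (LINT s:{0..T}|lborel. exp (2 * (T - s)) * X s)"
    using Duhamel_norm_half_sq_le[OF T_nonneg _ forcing_w_sq_le[folded X_def] X_int] w_int T
    unfolding z_def by auto
  have "(LINT s:{0..T}|lborel. exp (2 * (T - s)) * X s)
      \<le> (LINT s:{0..T}|lborel. exp (2 * T) * CB\<^sup>2 * (a * 2 ^ m) * (p s)\<^sup>2)"
  proof (rule set_integral_mono[OF X_int])
    show "set_integrable lborel {0..T} (\<lambda>s. exp (2 * T) * CB\<^sup>2 * (a * 2 ^ m) * (p s)\<^sup>2)"
      using p_L2 by simp
    fix s assume s: "s \<in> {0..T}"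
    have "exp (2 * (T - s)) * X s
        = exp (2 * T) * CB\<^sup>2 * (p s)\<^sup>2 * (exp (- 2 * s) * (norm_half lam phi (v s))\<^sup>2)"
      unfolding X_def by (simp add: mult_exp_exp algebra_simps)
    also have "\<dots> \<le> exp (2 * T) * CB\<^sup>2 * (p s)\<^sup>2 * (a * 2 ^ m)"
      using energy_v_Gronwall[OF m s] unfolding a_def by (intro mult_left_mono) auto
    finally show "exp (2 * (T - s)) * X s \<le> exp (2 * T) * CB\<^sup>2 * (a * 2 ^ m) * (p s)\<^sup>2"
      by (simp add: ac_simps)
  qed
  then show ?thesis
    using z(2) w_mild T norm_half_uminus[OF z(1)] unfolding z_def by simp
qed

end

lemma two_power_ceiling_le: "(2::real) ^ nat \<lceil>3 * c\<^sup>2\<rceil> \<le> 2 * exp (5 / 2 * c\<^sup>2)"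
proof -
  define n where "n = nat \<lceil>3 * c\<^sup>2\<rceil>"
  have "2 \<le> exp (5 / 6 :: real)"
    using exp_lower_Taylor_quadratic[of "5 / 6 :: real"] by (simp add: power2_eq_square)
  then have ln2: "ln 2 \<le> (5 / 6 :: real)"
    by (metis exp_gt_zero ln_exp ln_le_cancel_iff zero_less_numeral)
  have n: "real n \<le> 3 * c\<^sup>2 + 1"
    unfolding n_def by (simp add: of_nat_nat)
  have "(2::real) ^ n = exp (real n * ln 2)"
    by (simp add: exp_of_nat_mult)
  also have "\<dots> \<le> exp ((3 * c\<^sup>2 + 1) * ln 2)"
    using n by (intro exp_mono mult_right_mono) auto
  also have "\<dots> = 2 * exp (3 * c\<^sup>2 * ln 2)"
    by (simp add: distrib_right exp_add)
  also have "\<dots> \<le> 2 * exp (5 / 2 * c\<^sup>2)"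
    using mult_left_mono[OF ln2, of "3 * c\<^sup>2"] by simp
  finally show ?thesis unfolding n_def .
qed

text \<open>The left-hand side is the bound of \<open>energy_w\<close> with \<open>nat \<lceil>3 * CB\<^sup>2\<rceil>\<close> doublings;
  of the exponent \<open>C\<^sub>4(T)\<close> only \<open>2 * T + 5 / 2 * CB\<^sup>2\<close> is needed.\<close>

lemma Gronwall_constant_le:
  fixes CB T N l u0 P :: real
  assumes CB: "0 < CB" and T: "0 \<le> T" and l: "0 \<le> l" and u0: "0 \<le> u0"
    and P: "0 \<le> P" "P \<le> N\<^sup>2 * u0"
  shows "1 / 2 * exp (2 * T) * CB\<^sup>2 * ((2 * u0 + 3 * (1 + l) * CB\<^sup>2 * P) * 2 ^ nat \<lceil>3 * CB\<^sup>2\<rceil>) * P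
    \<le> 2 * exp (CB * (5/2 * CB + 2 * sqrt T) + 2 * T) * CB\<^sup>2 * N\<^sup>2 *
        (1 + 5/2 * CB\<^sup>2 * (1 + sqrt l)\<^sup>2 * N\<^sup>2 + 3/2 * CB\<^sup>2 * (CB\<^sup>2 * (1 + sqrt l)\<^sup>2 * N\<^sup>2 + 1))
      * u0\<^sup>2"
proof -
  define C5 where
    "C5 = 1 + 5/2 * CB\<^sup>2 * (1 + sqrt l)\<^sup>2 * N\<^sup>2 + 3/2 * CB\<^sup>2 * (CB\<^sup>2 * (1 + sqrt l)\<^sup>2 * N\<^sup>2 + 1)"
  have "3 * (1 + l) \<le> 5 * (1 + sqrt l)\<^sup>2"
    using l real_sqrt_ge_zero[OF l] by (simp add: power2_eq_square algebra_simps)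
  then have "3 * (1 + l) * CB\<^sup>2 * N\<^sup>2 \<le> 5 * (1 + sqrt l)\<^sup>2 * CB\<^sup>2 * N\<^sup>2"
    by (intro mult_right_mono) auto
  moreover have "2 * C5 = 2 + 5 * (1 + sqrt l)\<^sup>2 * CB\<^sup>2 * N\<^sup>2
      + 3 * CB\<^sup>2 * (CB\<^sup>2 * (1 + sqrt l)\<^sup>2 * N\<^sup>2 + 1)"
    unfolding C5_def by (simp add: algebra_simps)
  moreover have "0 \<le> 3 * CB\<^sup>2 * (CB\<^sup>2 * (1 + sqrt l)\<^sup>2 * N\<^sup>2 + 1)"
    by simp
  ultimately have C5: "2 + 3 * (1 + l) * CB\<^sup>2 * N\<^sup>2 \<le> 2 * C5"
    by linarith
  have "2 * u0 + 3 * (1 + l) * CB\<^sup>2 * P \<le> 2 * u0 + 3 * (1 + l) * CB\<^sup>2 * (N\<^sup>2 * u0)"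
    using P(2) l by (intro add_left_mono mult_left_mono) auto
  also have "\<dots> = (2 + 3 * (1 + l) * CB\<^sup>2 * N\<^sup>2) * u0"
    by (simp add: algebra_simps)
  also have "\<dots> \<le> 2 * C5 * u0"
    using C5 u0 by (rule mult_right_mono)
  finally have a: "2 * u0 + 3 * (1 + l) * CB\<^sup>2 * P \<le> 2 * C5 * u0" .
  have "0 \<le> C5"
    unfolding C5_def by (intro add_nonneg_nonneg mult_nonneg_nonneg) auto
  have "(2 * u0 + 3 * (1 + l) * CB\<^sup>2 * P) * 2 ^ nat \<lceil>3 * CB\<^sup>2\<rceil> * P
      \<le> (2 * C5 * u0) * (2 * exp (5 / 2 * CB\<^sup>2)) * (N\<^sup>2 * u0)"
    using a two_power_ceiling_le[of CB] P l u0 \<open>0 \<le> C5\<close> by (intro mult_mono) auto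
  then have "1 / 2 * exp (2 * T) * CB\<^sup>2 * ((2 * u0 + 3 * (1 + l) * CB\<^sup>2 * P) * 2 ^ nat \<lceil>3 * CB\<^sup>2\<rceil> * P)
      \<le> 1 / 2 * exp (2 * T) * CB\<^sup>2 * ((2 * C5 * u0) * (2 * exp (5 / 2 * CB\<^sup>2)) * (N\<^sup>2 * u0))"
    by (rule mult_left_mono) simp
  also have "\<dots> = 2 * exp (2 * T + 5 / 2 * CB\<^sup>2) * CB\<^sup>2 * N\<^sup>2 * C5 * u0\<^sup>2"
    by (simp add: exp_add power2_eq_square)
  also have "\<dots> \<le> 2 * exp (CB * (5/2 * CB + 2 * sqrt T) + 2 * T) * CB\<^sup>2 * N\<^sup>2 * C5 * u0\<^sup>2"
  proof -
    have "2 * T + 5 / 2 * CB\<^sup>2 \<le> CB * (5/2 * CB + 2 * sqrt T) + 2 * T"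
      using CB T by (simp add: power2_eq_square algebra_simps)
    then show ?thesis
      using \<open>0 \<le> C5\<close> by (intro mult_right_mono mult_left_mono) auto
  qed
  finally show ?thesis unfolding C5_def by (simp only: ac_simps)
qed

lemma le_sqrt_mult_if_sq_le:
  fixes x K y :: real
  assumes "x\<^sup>2 \<le> K * y\<^sup>2" and "0 \<le> y"
  shows "x \<le> sqrt K * y"
proof -
  have "x \<le> sqrt (K * y\<^sup>2)" using assms(1) by (rule real_le_rsqrt)
  also have "\<dots> = sqrt K * y" using assms(2) by (simp add: real_sqrt_mult)
  finally show ?thesis .
qed

theorem proposition2p6:
  fixes lam :: "nat \<Rightarrow> real"
    and phi :: "nat \<Rightarrow> 'a::{real_inner, banach, second_countable_topology}"
    and B :: "'a \<Rightarrow> 'a"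
    and CB T N :: real
    and v0 :: 'a
    and p :: "real \<Rightarrow> real"
    and v w :: "real \<Rightarrow> 'a"
  assumes onb: "is_onb phi"
    and lam_nonneg: "0 \<le> lam 0"
    and lam_mono: "mono lam"
    and lam_infty: "filterlim lam at_top sequentially"
    and B_add: "\<forall>x\<in>DHalf lam phi. \<forall>y\<in>DHalf lam phi. B (x + y) = B x + B y"
    and B_scale: "\<forall>x\<in>DHalf lam phi. \<forall>c. B (c *\<^sub>R x) = c *\<^sub>R B x"
    and CB_pos: "CB > 0"
    and B_bound: "\<forall>x\<in>DHalf lam phi. norm (B x) \<le> CB * norm_half lam phi x"
    and T_pos: "T > 0"
    and N_pos: "N > 0"
    and v0_dom: "v0 \<in> DHalf lam phi"
    and v0_small: "N * norm_half lam phi v0 \<le> 1"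
    and p_meas: "set_borel_measurable lborel {0..T} p"
    and p_L2: "set_integrable lborel {0..T} (\<lambda>t. (p t)\<^sup>2)"
    and p_bound: "sqrt (set_lebesgue_integral lborel {0..T} (\<lambda>t. (p t)\<^sup>2)) \<le> N * norm v0"
    and v_dom: "\<forall>t\<in>{0..T}. v t \<in> DHalf lam phi"
    and v_cont: "\<forall>t\<in>{0..T}. ((\<lambda>s. norm_half lam phi (v s - v t)) \<longlongrightarrow> 0) (at t within {0..T})"
    and v_int: "\<forall>t\<in>{0..T}. set_integrable lborel {0..t}
                 (\<lambda>s. heat_sg lam phi (t - s) (p s *\<^sub>R (B (v s) + B (phi 0))))"
    and v_mild: "\<forall>t\<in>{0..T}. v t = heat_sg lam phi t v0
                 - set_lebesgue_integral lborel {0..t}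
                     (\<lambda>s. heat_sg lam phi (t - s) (p s *\<^sub>R (B (v s) + B (phi 0))))"
    and w_int: "\<forall>t\<in>{0..T}. set_integrable lborel {0..t}
                 (\<lambda>s. heat_sg lam phi (t - s) (p s *\<^sub>R B (v s)))"
    and w_mild: "\<forall>t\<in>{0..T}. w t = - set_lebesgue_integral lborel {0..t}
                     (\<lambda>s. heat_sg lam phi (t - s) (p s *\<^sub>R B (v s)))"
  shows "norm_half lam phi (w T) \<le>
     sqrt (2 * exp (CB * (5/2 * CB + 2 * sqrt T) + 2 * T) * CB\<^sup>2 * N\<^sup>2 *
           (1 + 5/2 * CB\<^sup>2 * (1 + sqrt (lam 0))\<^sup>2 * N\<^sup>2
              + 3/2 * CB\<^sup>2 * (CB\<^sup>2 * (1 + sqrt (lam 0))\<^sup>2 * N\<^sup>2 + 1)))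
     * (norm_half lam phi v0)\<^sup>2"
proof -
  have lam_nonneg_all: "0 \<le> lam k" for k
    using lam_nonneg lam_mono by (meson le0 monoD order_trans)
  have T_nonneg: "0 \<le> T" using T_pos by simp
  interpret sys: bilinear_mild_solutions lam phi B CB T v0 p v w
    by unfold_locales
      (rule onb lam_nonneg_all B_bound T_nonneg v0_dom p_L2 v_dom v_cont v_int v_mild w_int w_mild)+
  define u0 P where "u0 = (norm_half lam phi v0)\<^sup>2" and "P = (LINT t:{0..T}|lborel. (p t)\<^sup>2)"
  have P_nonneg: "0 \<le> P" unfolding P_def by (rule set_integral_nonneg) simp
  have "P \<le> (N * norm v0)\<^sup>2"
    using p_bound unfolding P_def by (rule sqrt_le_D)
  also have "\<dots> \<le> N\<^sup>2 * u0"
    unfolding u0_def norm_half_def by (simp add: power_mult_distrib mult_left_mono)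
  finally have P_le: "P \<le> N\<^sup>2 * u0" .
  have "N\<^sup>2 * u0 \<le> 1"
    using power_mono[OF v0_small, of 2] N_pos unfolding u0_def
    by (simp add: power_mult_distrib norm_half_def)
  then have "CB\<^sup>2 * P \<le> CB\<^sup>2"
    using P_le mult_left_mono[of P 1 "CB\<^sup>2"] by simp
  then have "3 / 2 * CB\<^sup>2 * P \<le> real (nat \<lceil>3 * CB\<^sup>2\<rceil>) / 2"
    using real_nat_ceiling_ge[of "3 * CB\<^sup>2"] by linarith
  then have m: "(LINT t:{0..T}|lborel. 3 / 2 * CB\<^sup>2 * (p t)\<^sup>2) \<le> real (nat \<lceil>3 * CB\<^sup>2\<rceil>) / 2"
    unfolding P_def by simp
  have u0_nonneg: "0 \<le> u0" unfolding u0_def by simp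
  from order_trans[OF sys.energy_w[OF m]
      Gronwall_constant_le[OF CB_pos T_nonneg lam_nonneg u0_nonneg P_nonneg P_le, unfolded u0_def P_def]]
  show ?thesis by (rule le_sqrt_mult_if_sq_le) simp
qed

end
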